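(* Let $k, m \in \mathbb{N}$ with $k \ge 2$ and $m \ge 4$, and let $f$ be a valid bounds-function. If $\mathrm{pdp}_f(k,m) = \emptyset$, then $\mathrm{minvdeg}(\mathcal{MU}_{\delta=k}) < m$.
   Context: Literals come with a fixed-point-free involution $x \mapsto \overline{x}$; variables are positive literals. A clause is a finite set $C$ of literals with $C \cap \overline{C} = \emptyset$; a clause-set is a finite set of clauses. $\delta(F) = |F| - |\mathrm{var}(F)|$. $\mathcal{MU}_{\delta=k}$ is the class of minimally unsatisfiable clause-sets (unsatisfiable, but satisfiable after removing any clause) of deficiency $k$. $\mathrm{ld}_F(x)$ is the number of clauses containing $x$, $\mathrm{vdeg}_F(v) = \mathrm{ld}_F(v)+\mathrm{ld}_F(\overline{v})$, $\mathrm{minvdeg}(F) = \min_{v \in \mathrm{var}(F)}\mathrm{vdeg}_F(v)$; for a class $\mathcal{D}$, $\mathrm{minvdeg}(\mathcal{D})$ is the supremum of $\mathrm{minvdeg}(F)$ over $F \in \mathcal{D}$ with $\mathrm{var}(F) \ne \emptyset$. Let $\mu(k) = \mathrm{minvdeg}(\mathcal{MU}_{\delta=k})$. A valid bounds-function is a function $f : \mathbb{N} \to \mathbb{N} \cup \{+\infty\}$ with $f(1) = 2$, $f$ monotonically increasing, and $\mu(k) \le f(k)$ for all $k \in \mathbb{N}$. For $k \ge 2$, $m \ge 4$, the set $\mathrm{pdp}_f(k,m)$ of potential degree-pairs is the set of pairs $(e_0,e_1) \in \mathbb{N}^2$ with: (i) $e_0, e_1 \ge 2$; (ii) $e_0,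 e_1 \le k$; (iii) $e_0 + e_1 = m$; (iv) $e_0 \le e_1$; (v) $f(k - e_\varepsilon + 1) + e_\varepsilon \ge m$ for both $\varepsilon \in \{0,1\}$. *)

theory Defs
  imports Main "HOL-Library.Extended_Nat"
begin

datatype lit = Pos nat | Neg nat

fun comp :: "lit \<Rightarrow> lit" where
  "comp (Pos v) = Neg v"
| "comp (Neg v) = Pos v"

fun var_lit :: "lit \<Rightarrow> nat" where
  "var_lit (Pos v) = v"
| "var_lit (Neg v) = v"

definition is_clause :: "lit set \<Rightarrow> bool" where
  "is_clause C \<longleftrightarrow> finite C \<and> C \<inter> comp ` C = {}"

definition is_clause_set :: "lit set set \<Rightarrow> bool" where
  "is_clause_set F \<longleftrightarrow> finite F \<and> (\<forall>C\<in>F. is_clause C)"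

definition var :: "lit set set \<Rightarrow> nat set" where
  "var F = (\<Union>C\<in>F. var_lit ` C)"

fun lit_true :: "(nat \<Rightarrow> bool) \<Rightarrow> lit \<Rightarrow> bool" where
  "lit_true \<phi> (Pos v) = \<phi> v"
| "lit_true \<phi> (Neg v) = (\<not> \<phi> v)"

definition satisfiable :: "lit set set \<Rightarrow> bool" where
  "satisfiable F \<longleftrightarrow> (\<exists>\<phi>. \<forall>C\<in>F. \<exists>x\<in>C. lit_true \<phi> x)"

definition MU :: "lit set set \<Rightarrow> bool" where
  "MU F \<longleftrightarrow> is_clause_set F \<and> \<not> satisfiable F \<and> (\<forall>C\<in>F. satisfiable (F - {C}))"

definition deficiency :: "lit set set \<Rightarrow> int" where
  "deficiency F = int (card F) - int (card (var F))"

definition MU_delta :: "nat \<Rightarrow> lit set set set" where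
  "MU_delta k = {F. MU F \<and> deficiency F = int k}"

definition ld :: "lit set set \<Rightarrow> lit \<Rightarrow> nat" where
  "ld F x = card {C\<in>F. x \<in> C}"

definition vdeg :: "lit set set \<Rightarrow> nat \<Rightarrow> nat" where
  "vdeg F v = ld F (Pos v) + ld F (Neg v)"

definition minvdeg :: "lit set set \<Rightarrow> nat" where
  "minvdeg F = Min (vdeg F ` var F)"

definition minvdeg_class :: "lit set set set \<Rightarrow> enat" where
  "minvdeg_class D = Sup {enat (minvdeg F) | F. F \<in> D \<and> var F \<noteq> {}}"

definition mu :: "nat \<Rightarrow> enat" where
  "mu k = minvdeg_class (MU_delta k)"

definition valid_bounds_function :: "(nat \<Rightarrow> enat) \<Rightarrow> bool" where
  "valid_bounds_function f \<longleftrightarrow> f 1 = 2 \<and> mono_on {1..} f \<and> (\<forall>k\<ge>1. mu k \<le> f k)"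

definition pdp :: "(nat \<Rightarrow> enat) \<Rightarrow> nat \<Rightarrow> nat \<Rightarrow> (nat \<times> nat) set" where
  "pdp f k m = {(e0, e1). e0 \<ge> 2 \<and> e1 \<ge> 2 \<and> e0 \<le> k \<and> e1 \<le> k \<and> e0 + e1 = m \<and> e0 \<le> e1
      \<and> f (k - e0 + 1) + enat e0 \<ge> enat m \<and> f (k - e1 + 1) + enat e1 \<ge> enat m}"

end

theory Submission
  imports Defs
begin

text \<open>Add literals to the clauses of \<open>F\<close> as long as it stays unsatisfiable; this keeps the
  numbers of clauses and variables and can only raise degrees. In the resulting saturated
  clause-set pick a variable \<open>v\<close> of minimum degree \<open>M \<ge> minvdeg F\<close>. If a literal of \<open>v\<close> occurs
  only once, setting it true gives an MU clause-set of the same deficiency with fewer variables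
  and all degrees still \<open>\<ge> M\<close>; recurse. Otherwise both literals occur \<open>e\<^sub>0, e\<^sub>1 \<ge> 2\<close> times, and
  setting \<open>v\<close>'s literal with \<open>e\<^sub>\<epsilon>\<close> occurrences true gives an MU clause-set of deficiency
  \<open>k - e\<^sub>\<epsilon> + 1\<close> (so \<open>e\<^sub>\<epsilon> \<le> k\<close> by Tarsi's lemma) whose minimum degree is at least \<open>M - e\<^sub>\<epsilon>\<close> and at
  most \<open>\<mu>(k - e\<^sub>\<epsilon> + 1)\<close>. If \<open>M \<ge> m\<close>, lowering \<open>(e\<^sub>0, e\<^sub>1)\<close> to sum \<open>m\<close> preserves these
  conditions with the monotone \<open>f \<ge> \<mu>\<close> in place of \<open>\<mu>\<close>, giving an element of \<open>pdp f k m\<close>.\<close>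

lemma var_lit_comp [simp]: "var_lit (comp l) = var_lit l"
  by (cases l) auto

lemma comp_comp [simp]: "comp (comp l) = l"
  by (cases l) auto

lemma comp_neq [simp]: "comp l \<noteq> l" "l \<noteq> comp l"
  by (cases l; auto)+

lemma lit_true_comp [simp]: "lit_true \<phi> (comp l) \<longleftrightarrow> \<not> lit_true \<phi> l"
  by (cases l) auto

lemma var_lit_eq_iff: "var_lit l = var_lit y \<longleftrightarrow> l = y \<or> l = comp y"
  by (cases l; cases y) auto

lemma lit_true_cong: "\<phi> (var_lit l) = \<psi> (var_lit l) \<Longrightarrow> lit_true \<phi> l = lit_true \<psi> l"
  by (cases l) auto

lemma var_Un [simp]: "var (A \<union> B) = var A \<union> var B"
  by (auto simp: var_def)

lemma var_insert [simp]: "var (insert C F) = var_lit ` C \<union> var F"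
  by (auto simp: var_def)

lemma var_empty [simp]: "var {} = {}"
  by (auto simp: var_def)

lemma var_mono: "A \<subseteq> B \<Longrightarrow> var A \<subseteq> var B"
  by (auto simp: var_def)

lemma finite_var_subset: "finite (var F) \<Longrightarrow> H \<subseteq> F \<Longrightarrow> finite (var H)"
  by (meson finite_subset var_mono)

lemma finite_var: "is_clause_set F \<Longrightarrow> finite (var F)"
  by (auto simp: var_def is_clause_set_def is_clause_def)

lemma is_clause_comp_notin: "is_clause C \<Longrightarrow> l \<in> C \<Longrightarrow> comp l \<notin> C"
  unfolding is_clause_def by force

lemma is_clause_insert:
  assumes "is_clause C" "comp z \<notin> C"
  shows "is_clause (insert z C)"
  using assms unfolding is_clause_def by (auto simp: image_iff)

lemma is_clause_Diff: "is_clause C \<Longrightarrow> is_clause (C - A)"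
  unfolding is_clause_def by blast

lemma clause_subset_lits: "C \<in> F \<Longrightarrow> C \<subseteq> Pos ` var F \<union> Neg ` var F"
proof
  fix l assume "C \<in> F" "l \<in> C"
  then have "var_lit l \<in> var F" by (auto simp: var_def)
  then show "l \<in> Pos ` var F \<union> Neg ` var F" by (cases l) auto
qed

lemma vdeg_var_lit: "vdeg F (var_lit y) = ld F y + ld F (comp y)"
  by (cases y) (auto simp: vdeg_def)

lemma var_lit_image_iff: "w \<in> var_lit ` C \<longleftrightarrow> Pos w \<in> C \<or> Neg w \<in> C"
proof
  assume "w \<in> var_lit ` C"
  then obtain l where "l \<in> C" "w = var_lit l" by blast
  then show "Pos w \<in> C \<or> Neg w \<in> C" by (cases l) auto
qed (metis image_eqI var_lit.simps)

lemma vdeg_eq_card: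
  assumes "is_clause_set F"
  shows "vdeg F w = card {C\<in>F. w \<in> var_lit ` C}"
proof -
  have "{C\<in>F. w \<in> var_lit ` C} = {C\<in>F. Pos w \<in> C} \<union> {C\<in>F. Neg w \<in> C}"
    by (auto simp: var_lit_image_iff)
  moreover have "{C\<in>F. Pos w \<in> C} \<inter> {C\<in>F. Neg w \<in> C} = {}"
    using assms is_clause_comp_notin[of _ "Pos w"] by (auto simp: is_clause_set_def)
  moreover have "finite F" using assms by (simp add: is_clause_set_def)
  ultimately show ?thesis by (simp add: vdeg_def ld_def card_Un_disjoint)
qed

lemma card_le_one_if_var_empty:
  assumes "var F = {}"
  shows "card F \<le> 1"
proof -
  have "F \<subseteq> {{}}" using assms by (auto simp: var_def)
  then show ?thesis using card_mono[of "{{}}" F] by simp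
qed

lemma ld_le_one_if_var_eq:
  assumes "is_clause_set F" "var F = {var_lit y}"
  shows "ld F y \<le> 1"
proof -
  have "{C\<in>F. y \<in> C} \<subseteq> {{y}}"
  proof
    fix C assume C: "C \<in> {C\<in>F. y \<in> C}"
    have "C \<subseteq> {y}"
    proof
      fix l assume "l \<in> C"
      then have "var_lit l = var_lit y" using C assms(2) by (auto simp: var_def)
      moreover have "comp y \<notin> C" using C assms(1) is_clause_comp_notin by (auto simp: is_clause_set_def)
      ultimately show "l \<in> {y}" using \<open>l \<in> C\<close> var_lit_eq_iff by auto
    qed
    then show "C \<in> {{y}}" using C by blast
  qed
  then show ?thesis unfolding ld_def using card_mono[of "{{y}}"] by simp
qed

definition satisfies :: "(nat \<Rightarrow> bool) \<Rightarrow> lit set set \<Rightarrow> bool" where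
  "satisfies \<phi> F \<longleftrightarrow> (\<forall>C\<in>F. \<exists>l\<in>C. lit_true \<phi> l)"

lemma satisfiable_iff_satisfies: "satisfiable F \<longleftrightarrow> (\<exists>\<phi>. satisfies \<phi> F)"
  by (simp add: satisfiable_def satisfies_def)

lemma satisfies_cong:
  assumes "\<forall>v\<in>var F. \<phi> v = \<psi> v" "satisfies \<phi> F"
  shows "satisfies \<psi> F"
  unfolding satisfies_def
proof
  fix C assume "C \<in> F"
  then obtain l where "l \<in> C" "lit_true \<phi> l" using assms(2) by (auto simp: satisfies_def)
  moreover have "var_lit l \<in> var F" using \<open>C \<in> F\<close> \<open>l \<in> C\<close> by (auto simp: var_def)
  ultimately show "\<exists>l\<in>C. lit_true \<psi> l" using assms(1) lit_true_cong by metis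
qed

definition set_lit :: "(nat \<Rightarrow> bool) \<Rightarrow> lit \<Rightarrow> nat \<Rightarrow> bool" where
  "set_lit \<phi> y = \<phi>(var_lit y := (y = Pos (var_lit y)))"

lemma lit_true_set_lit:
  "lit_true (set_lit \<phi> y) l \<longleftrightarrow> (if var_lit l = var_lit y then l = y else lit_true \<phi> l)"
  by (cases l; cases y) (auto simp: set_lit_def)

lemma MU_is_clause_set: "MU F \<Longrightarrow> is_clause_set F"
  by (simp add: MU_def)

lemma MU_finite: "MU F \<Longrightarrow> finite F"
  by (simp add: MU_def is_clause_set_def)

lemma MU_is_clause: "MU F \<Longrightarrow> C \<in> F \<Longrightarrow> is_clause C"
  by (simp add: MU_def is_clause_set_def)

lemma MU_not_satisfies: "MU F \<Longrightarrow> \<not> satisfies \<phi> F"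
  by (auto simp: MU_def satisfiable_iff_satisfies)

lemma MU_ex_satisfies_Diff: "MU F \<Longrightarrow> C \<in> F \<Longrightarrow> \<exists>\<phi>. satisfies \<phi> (F - {C})"
  by (simp add: MU_def satisfiable_iff_satisfies)

lemma MU_falsifies:
  assumes "MU F" "satisfies \<phi> (F - {C})" "l \<in> C"
  shows "\<not> lit_true \<phi> l"
  using assms MU_not_satisfies[OF assms(1), of \<phi>] by (auto simp: satisfies_def)

lemma MU_ld_pos:
  assumes mu: "MU F" and z: "var_lit z \<in> var F"
  shows "0 < ld F z"
proof (rule ccontr)
  assume "\<not> 0 < ld F z"
  then have no_z: "\<forall>D\<in>F. z \<notin> D" using MU_finite[OF mu] by (simp add: ld_def)
  obtain E l where E: "E \<in> F" "l \<in> E" "var_lit l = var_lit z" using z by (auto simp: var_def)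
  then have "comp z \<in> E" using no_z var_lit_eq_iff[of l z] by auto
  obtain \<phi> where \<phi>: "satisfies \<phi> (F - {E})" using MU_ex_satisfies_Diff[OF mu E(1)] by blast
  have "satisfies (set_lit \<phi> (comp z)) F"
    unfolding satisfies_def
  proof
    fix D assume D: "D \<in> F"
    show "\<exists>l\<in>D. lit_true (set_lit \<phi> (comp z)) l"
    proof (cases "comp z \<in> D")
      case False
      then obtain l where l: "l \<in> D" "lit_true \<phi> l"
        using \<phi> D \<open>comp z \<in> E\<close> by (auto simp: satisfies_def)
      then have "var_lit l \<noteq> var_lit (comp z)" using False D no_z var_lit_eq_iff by fastforce
      then have "lit_true (set_lit \<phi> (comp z)) l" using l(2) by (simp add: lit_true_set_lit)
      then show ?thesis using l(1) by blast
    next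
      case True
      have "lit_true (set_lit \<phi> (comp z)) (comp z)" by (simp add: lit_true_set_lit)
      then show ?thesis using True by blast
    qed
  qed
  then show False using MU_not_satisfies[OF mu] by blast
qed

section \<open>Hall's condition and Tarsi's lemma\<close>

definition hall_condition :: "lit set set \<Rightarrow> nat set \<Rightarrow> bool" where
  "hall_condition F V \<longleftrightarrow> (\<forall>H\<subseteq>F. card H \<le> card (var H - V))"

lemma hall_condition_subset: "hall_condition F V \<Longrightarrow> H \<subseteq> F \<Longrightarrow> hall_condition H V"
  by (auto simp: hall_condition_def)

lemma card_var_Un_Diff:
  assumes "finite (var H)" "finite (var K)"
  shows "card (var (H \<union> K) - V) = card (var H - V) + card (var K - (V \<union> var H))"
proof -
  have "var (H \<union> K) - V = (var H - V) \<union> (var K - (V \<union> var H))" by auto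
  with assms show ?thesis by (simp add: card_Un_disjoint Int_Diff disjoint_iff)
qed

lemma hall_condition_Diff_tight:
  assumes hall: "hall_condition F V" and fin: "finite F" "finite (var F)"
    and H: "H \<subseteq> F" "card (var H - V) = card H"
  shows "hall_condition (F - H) (V \<union> var H)"
  unfolding hall_condition_def
proof (intro allI impI)
  fix K assume K: "K \<subseteq> F - H"
  have KF: "K \<subseteq> F" using K by blast
  have "finite H" "finite K" using finite_subset[OF H(1) fin(1)] finite_subset[OF KF fin(1)] by simp_all
  moreover have "H \<inter> K = {}" using K by blast
  ultimately have "card H + card K = card (H \<union> K)" by (simp add: card_Un_disjoint)
  also have "\<dots> \<le> card (var (H \<union> K) - V)"
    using hall H(1) K unfolding hall_condition_def by (metis Diff_subset Un_subset_iff order_trans)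
  also have "\<dots> = card H + card (var K - (V \<union> var H))"
  proof -
    have "finite (var H)" "finite (var K)"
      using finite_var_subset[OF fin(2) H(1)] finite_var_subset[OF fin(2) KF] by simp_all
    then show ?thesis using card_var_Un_Diff H(2) by simp
  qed
  finally show "card K \<le> card (var K - (V \<union> var H))" by simp
qed

lemma hall_condition_Diff_slack:
  assumes fin: "finite (var F)"
    and slack: "\<forall>H\<subseteq>F. H \<noteq> {} \<longrightarrow> H \<noteq> F \<longrightarrow> card H < card (var H - V)"
    and C: "C \<in> F"
  shows "hall_condition (F - {C}) (insert u V)"
  unfolding hall_condition_def
proof (intro allI impI)
  fix K assume K: "K \<subseteq> F - {C}"
  show "card K \<le> card (var K - insert u V)"
  proof (cases "K = {}")
    case False
    have "finite (var K)" using finite_var_subset[OF fin] K by blast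
    have "card K < card (var K - V)" using slack K C False by blast
    also have "\<dots> \<le> card (insert u (var K - insert u V))"
      using \<open>finite (var K)\<close> by (intro card_mono) auto
    also have "\<dots> \<le> Suc (card (var K - insert u V))"
      by (simp add: card_insert_if \<open>finite (var K)\<close>)
    finally show ?thesis by simp
  qed simp
qed

text \<open>Hall's theorem in disguise: the condition gives every clause a private variable outside
  \<open>V\<close>. The induction splits off a tight subfamily if there is one, and otherwise satisfies an
  arbitrary clause through one of its variables.\<close>

lemma hall_extend_assignment:
  assumes "hall_condition F V" "finite F" "finite (var F)"
  shows "\<exists>\<phi>. (\<forall>v\<in>V. \<phi> v = \<psi> v) \<and> satisfies \<phi> F"
  using assms
proof (induction "card F" arbitrary: F V \<psi> rule: less_induct)
  case less
  note hall = less.prems(1) and fin = less.prems(2,3)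
  consider (empty) "F = {}"
    | (tight) H where "H \<subseteq> F" "H \<noteq> {}" "H \<noteq> F" "card (var H - V) = card H"
    | (slack) C where "C \<in> F" "\<forall>H\<subseteq>F. H \<noteq> {} \<longrightarrow> H \<noteq> F \<longrightarrow> card H < card (var H - V)"
    using hall unfolding hall_condition_def by (metis antisym_conv1 ex_in_conv)
  then show ?case
  proof cases
    case empty
    then show ?thesis by (auto simp: satisfies_def)
  next
    case tight
    have finH: "finite H" "finite (var H)"
      using finite_subset[OF tight(1) fin(1)] finite_var_subset[OF fin(2) tight(1)] by simp_all
    have "card H < card F" using tight fin by (intro psubset_card_mono) auto
    then obtain \<phi>1 where \<phi>1: "\<forall>v\<in>V. \<phi>1 v = \<psi> v" "satisfies \<phi>1 H"
      using less.hyps[OF _ hall_condition_subset[OF hall tight(1)] finH] by blast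
    have "card (F - H) < card F" using tight fin by (intro psubset_card_mono) auto
    then obtain \<phi>2 where \<phi>2: "\<forall>v\<in>V \<union> var H. \<phi>2 v = \<phi>1 v" "satisfies \<phi>2 (F - H)"
      using less.hyps[OF _ hall_condition_Diff_tight[OF hall fin tight(1,4)] finite_Diff[OF fin(1)]
          finite_var_subset[OF fin(2) Diff_subset]] by blast
    have "satisfies \<phi>2 H" using satisfies_cong[OF _ \<phi>1(2), of \<phi>2] \<phi>2(1) by simp
    then have "satisfies \<phi>2 F" using \<phi>2(2) by (auto simp: satisfies_def)
    then show ?thesis using \<phi>1(1) \<phi>2(1) by auto
  next
    case slack
    have "card {C} \<le> card (var {C} - V)" using hall slack(1) unfolding hall_condition_def by blast
    then have "0 < card (var {C} - V)" by simp
    then obtain x where "x \<in> var {C} - V" by (metis card_gt_0_iff ex_in_conv)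
    then obtain l where l: "l \<in> C" "var_lit l \<notin> V" by (auto simp: var_def)
    define \<psi>' where "\<psi>' = set_lit \<psi> l"
    have "card (F - {C}) < card F" using card_Diff1_less[OF fin(1) slack(1)] .
    then obtain \<phi> where \<phi>: "\<forall>v\<in>insert (var_lit l) V. \<phi> v = \<psi>' v" "satisfies \<phi> (F - {C})"
      using less.hyps[OF _ hall_condition_Diff_slack[OF fin(2) slack(2,1)] finite_Diff[OF fin(1)]
          finite_var_subset[OF fin(2) Diff_subset]] by blast
    have "lit_true \<phi> l" using \<phi>(1) lit_true_cong[of \<phi> l \<psi>'] by (simp add: \<psi>'_def lit_true_set_lit)
    then have "satisfies \<phi> F" using \<phi>(2) l(1) by (auto simp: satisfies_def)
    moreover have "\<forall>v\<in>V. \<phi> v = \<psi> v" using \<phi>(1) l(2) by (auto simp: \<psi>'_def set_lit_def)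
    ultimately show ?thesis by blast
  qed
qed

text \<open>Tarsi's lemma: take a proper subfamily \<open>H\<close> of maximal deficiency. Then \<open>F - H\<close> satisfies
  Hall's condition relative to \<open>var H\<close>, so an assignment satisfying \<open>H\<close> (which exists, as
  \<open>H\<close> misses a clause) extends to one satisfying \<open>F\<close>.\<close>

lemma MU_deficiency_pos:
  assumes mu: "MU F"
  shows "0 < deficiency F"
proof (rule ccontr)
  assume "\<not> 0 < deficiency F"
  have fin: "finite F" "finite (var F)" using mu by (simp_all add: MU_finite finite_var MU_is_clause_set)
  obtain H0 where H0: "H0 \<subseteq> F" "\<forall>H\<subseteq>F. deficiency H \<le> deficiency H0"
    using ex_is_arg_min_if_finite[of "Pow F" "\<lambda>H. - deficiency H"] fin(1)
    by (auto simp: is_arg_min_linorder)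
  define H where "H = (if H0 = F then {} else H0)"
  have H: "H \<subseteq> F" "H \<noteq> F" using H0 mu by (auto simp: H_def MU_def satisfiable_def)
  have max: "\<forall>K\<subseteq>F. deficiency K \<le> deficiency H"
    using H0 \<open>\<not> 0 < deficiency F\<close> by (auto simp: H_def deficiency_def)
  obtain C where "C \<in> F" "C \<notin> H" using H by blast
  then obtain \<psi> where "satisfies \<psi> (F - {C})" using MU_ex_satisfies_Diff[OF mu] by blast
  then have \<psi>: "satisfies \<psi> H" using \<open>C \<notin> H\<close> H(1) by (auto simp: satisfies_def)
  have "hall_condition (F - H) (var H)"
    unfolding hall_condition_def
  proof (intro allI impI)
    fix K assume K: "K \<subseteq> F - H"
    have KF: "K \<subseteq> F" using K by blast
    have finHK: "finite H" "finite K" "finite (var H)" "finite (var K)"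
      using finite_subset[OF H(1) fin(1)] finite_subset[OF KF fin(1)]
        finite_var_subset[OF fin(2) H(1)] finite_var_subset[OF fin(2) KF] by simp_all
    have "deficiency (H \<union> K) \<le> deficiency H" using max H(1) K by (metis Diff_subset Un_subset_iff order_trans)
    moreover have "card (H \<union> K) = card H + card K"
      using card_Un_disjoint[OF finHK(1,2)] K by blast
    moreover have "card (var (H \<union> K)) = card (var H) + card (var K - var H)"
      using card_var_Un_Diff[OF finHK(3,4), of "{}"] by simp
    ultimately show "card K \<le> card (var K - var H)" by (simp add: deficiency_def)
  qed
  then obtain \<phi> where \<phi>: "\<forall>v\<in>var H. \<phi> v = \<psi> v" "satisfies \<phi> (F - H)"
    using hall_extend_assignment[OF _ finite_Diff[OF fin(1)] finite_var_subset[OF fin(2) Diff_subset]]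
    by blast
  have "satisfies \<phi> H" using satisfies_cong[OF _ \<psi>, of \<phi>] \<phi>(1) by simp
  then show False using \<phi>(2) MU_not_satisfies[OF mu, of \<phi>] by (auto simp: satisfies_def)
qed

section \<open>Saturation\<close>

definition saturated :: "lit set set \<Rightarrow> bool" where
  "saturated F \<longleftrightarrow> MU F \<and> (\<forall>C\<in>F. \<forall>z. var_lit z \<in> var F \<longrightarrow> z \<notin> C \<longrightarrow> comp z \<notin> C
      \<longrightarrow> satisfiable (insert (insert z C) (F - {C})))"

lemma saturated_MU: "saturated F \<Longrightarrow> MU F"
  by (simp add: saturated_def)

lemma saturated_falsifying_assignment:
  assumes sat: "saturated F" and y: "var_lit y \<in> var F" and C: "C \<in> F" "y \<notin> C"
  obtains \<phi> where "satisfies \<phi> (F - {C})" "lit_true \<phi> y" "\<forall>l\<in>C. \<not> lit_true \<phi> l"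
proof -
  have mu: "MU F" using sat by (rule saturated_MU)
  obtain \<phi> where \<phi>: "satisfies \<phi> (F - {C})" "comp y \<in> C \<or> satisfies \<phi> {insert y C}"
  proof (cases "comp y \<in> C")
    case True
    then show ?thesis using that MU_ex_satisfies_Diff[OF mu C(1)] by blast
  next
    case False
    then have "satisfiable (insert (insert y C) (F - {C}))"
      using sat C y by (simp add: saturated_def)
    then show ?thesis using that by (auto simp: satisfiable_iff_satisfies satisfies_def)
  qed
  have falsified: "\<forall>l\<in>C. \<not> lit_true \<phi> l" using MU_falsifies[OF mu \<phi>(1)] by blast
  then have "lit_true \<phi> y" using \<phi>(2) by (auto simp: satisfies_def)
  with \<phi>(1) falsified show thesis using that by blast
qed

lemma MU_add_literal:
  assumes mu: "MU F" and C: "C \<in> F" and z: "var_lit z \<in> var F" "comp z \<notin> C"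
    and unsat: "\<not> satisfiable (insert (insert z C) (F - {C}))"
  shows "MU (insert (insert z C) (F - {C}))" "insert z C \<notin> F - {C}"
    "var (insert (insert z C) (F - {C})) = var F"
proof -
  show new: "insert z C \<notin> F - {C}"
  proof
    assume "insert z C \<in> F - {C}"
    then have "insert (insert z C) (F - {C}) = F - {C}" by blast
    then show False using unsat mu C by (simp add: MU_def)
  qed
  have "is_clause (insert z C)" using is_clause_insert[OF MU_is_clause[OF mu C] z(2)] .
  then have clauses: "is_clause_set (insert (insert z C) (F - {C}))"
    using MU_is_clause_set[OF mu] by (simp add: is_clause_set_def)
  have minimal: "satisfiable (insert (insert z C) (F - {C}) - {E})"
    if E: "E \<in> insert (insert z C) (F - {C})" for E
  proof (cases "E = insert z C")
    case True
    then show ?thesis using new mu C by (simp add: MU_def insert_Diff_if)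
  next
    case False
    then have "E \<in> F" "E \<noteq> C" using E by auto
    then obtain \<phi> where "satisfies \<phi> (F - {E})" using MU_ex_satisfies_Diff[OF mu] by blast
    then have "satisfies \<phi> (insert (insert z C) (F - {C}) - {E})"
      using C \<open>E \<noteq> C\<close> by (auto simp: satisfies_def)
    then show ?thesis by (auto simp: satisfiable_iff_satisfies)
  qed
  show "MU (insert (insert z C) (F - {C}))" using clauses unsat minimal by (simp add: MU_def)
  show "var (insert (insert z C) (F - {C})) = var F"
    using z(1) C by (auto simp: var_def)
qed

definition extends_clausewise :: "lit set set \<Rightarrow> lit set set \<Rightarrow> bool" where
  "extends_clausewise F G \<longleftrightarrow> (\<exists>g. bij_betw g F G \<and> (\<forall>C\<in>F. C \<subseteq> g C))"

lemma extends_clausewise_refl: "extends_clausewise F F"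
  unfolding extends_clausewise_def by (auto intro: exI[of _ id])

lemma extends_clausewise_add_literal:
  assumes ext: "extends_clausewise F G" and C: "C \<in> G" and new: "insert z C \<notin> G - {C}"
  shows "extends_clausewise F (insert (insert z C) (G - {C}))"
proof -
  obtain g where g: "bij_betw g F G" "\<forall>D\<in>F. D \<subseteq> g D"
    using ext by (auto simp: extends_clausewise_def)
  define h where "h D = (if D = C then insert z C else D)" for D
  have "bij_betw h G (insert (insert z C) (G - {C}))"
    unfolding bij_betw_def inj_on_def h_def using C new by auto
  moreover have "\<forall>D\<in>F. D \<subseteq> h (g D)" using g(2) by (auto simp: h_def)
  ultimately show ?thesis
    using bij_betw_trans[OF g(1)] unfolding extends_clausewise_def comp_def by blast
qed

lemma extends_clausewise_card: "extends_clausewise F G \<Longrightarrow> card G = card F"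
  by (auto simp: extends_clausewise_def bij_betw_same_card)

lemma extends_clausewise_vdeg_le:
  assumes ext: "extends_clausewise F G" and "is_clause_set F" "is_clause_set G"
  shows "vdeg F w \<le> vdeg G w"
proof -
  obtain g where g: "bij_betw g F G" "\<forall>C\<in>F. C \<subseteq> g C"
    using ext by (auto simp: extends_clausewise_def)
  have "card {C\<in>F. w \<in> var_lit ` C} = card (g ` {C\<in>F. w \<in> var_lit ` C})"
    using g(1) by (intro card_image[symmetric]) (auto simp: bij_betw_def intro: inj_on_subset)
  also have "\<dots> \<le> card {D\<in>G. w \<in> var_lit ` D}"
    using g \<open>is_clause_set G\<close> by (intro card_mono) (auto simp: is_clause_set_def bij_betw_def)
  finally show ?thesis using vdeg_eq_card assms(2,3) by simp
qed

text \<open>Among the finitely many MU clause-wise extensions of \<open>F\<close> on \<open>var F\<close>, one of maximal total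
  clause size is saturated, since adding a literal would increase the size.\<close>

lemma ex_saturated_extension:
  assumes mu: "MU F"
  obtains G where "saturated G" "extends_clausewise F G" "var G = var F"
proof -
  define weight :: "lit set set \<Rightarrow> nat" where "weight G = (\<Sum>C\<in>G. card C)" for G
  define S where "S = {G. MU G \<and> var G = var F \<and> extends_clausewise F G}"
  have "S \<subseteq> Pow (Pow (Pos ` var F \<union> Neg ` var F))"
    unfolding S_def using clause_subset_lits by blast
  moreover have "finite (var F)" using mu by (simp add: finite_var MU_is_clause_set)
  ultimately have "finite S" by (meson finite_Pow_iff finite_UnI finite_imageI finite_subset)
  moreover have "F \<in> S" using mu by (simp add: S_def extends_clausewise_refl)
  ultimately obtain G where G: "G \<in> S" "\<forall>H\<in>S. weight H \<le> weight G"
    using Max_in[of "weight ` S"] Max_ge[of "weight ` S"] by (metis empty_iff finite_imageI imageE image_eqI)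
  then have muG: "MU G" and varG: "var G = var F" and ext: "extends_clausewise F G"
    by (auto simp: S_def)
  have "saturated G"
    unfolding saturated_def
  proof (intro conjI muG ballI allI impI)
    fix C z assume C: "C \<in> G" and z: "var_lit z \<in> var G" "z \<notin> C" "comp z \<notin> C"
    show "satisfiable (insert (insert z C) (G - {C}))"
    proof (rule ccontr)
      assume unsat: "\<not> satisfiable (insert (insert z C) (G - {C}))"
      note added = MU_add_literal[OF muG C z(1,3) unsat]
      have "insert (insert z C) (G - {C}) \<in> S"
        using added extends_clausewise_add_literal[OF ext C added(2)] varG by (simp add: S_def)
      then have "weight (insert (insert z C) (G - {C})) \<le> weight G" using G(2) by blast
      moreover have "finite G" "finite C" using MU_finite[OF muG] MU_is_clause[OF muG C]
        by (simp_all add: is_clause_def)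
      ultimately show False
        using added(2) z(2) C by (simp add: weight_def sum.remove)
    qed
  qed
  with ext varG show thesis using that by blast
qed

section \<open>Applying a literal\<close>

definition assign :: "lit set set \<Rightarrow> lit \<Rightarrow> lit set set" where
  "assign F y = (\<lambda>C. C - {comp y}) ` {C\<in>F. y \<notin> C}"

lemma var_assign_subset: "var (assign F y) \<subseteq> var F - {var_lit y}"
proof
  fix w assume "w \<in> var (assign F y)"
  then obtain C l where C: "C \<in> F" "y \<notin> C" "l \<in> C" "l \<noteq> comp y" "w = var_lit l"
    by (auto simp: assign_def var_def)
  then have "var_lit l \<noteq> var_lit y" using C(2,3,4) var_lit_eq_iff[of l y] by auto
  then show "w \<in> var F - {var_lit y}" using C by (auto simp: var_def)
qed

lemma inj_on_assign:
  assumes sat: "saturated F" and y: "var_lit y \<in> var F"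
  shows "inj_on (\<lambda>C. C - {comp y}) {C\<in>F. y \<notin> C}"
proof (rule inj_onI)
  fix C D assume C: "C \<in> {C\<in>F. y \<notin> C}" and D: "D \<in> {C\<in>F. y \<notin> C}"
    and eq: "C - {comp y} = D - {comp y}"
  show "C = D"
  proof (rule ccontr)
    assume "C \<noteq> D"
    obtain \<phi> where \<phi>: "satisfies \<phi> (F - {C})" "lit_true \<phi> y" "\<forall>l\<in>C. \<not> lit_true \<phi> l"
      using saturated_falsifying_assignment[OF sat y] C by blast
    obtain l where l: "l \<in> D" "lit_true \<phi> l" using \<phi>(1) D \<open>C \<noteq> D\<close> by (auto simp: satisfies_def)
    then have "l \<noteq> comp y" using \<phi>(2) by auto
    then show False using eq l \<phi>(3) by blast
  qed
qed

lemma MU_assign: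
  assumes sat: "saturated F" and y: "var_lit y \<in> var F"
  shows "MU (assign F y)"
proof -
  have mu: "MU F" using sat by (rule saturated_MU)
  have clauses: "is_clause_set (assign F y)"
    using MU_is_clause_set[OF mu] is_clause_Diff by (auto simp: assign_def is_clause_set_def)
  have unsat: "\<not> satisfies \<phi> (assign F y)" for \<phi>
  proof
    assume \<phi>: "satisfies \<phi> (assign F y)"
    have "satisfies (set_lit \<phi> y) F"
      unfolding satisfies_def
    proof
      fix C assume C: "C \<in> F"
      show "\<exists>l\<in>C. lit_true (set_lit \<phi> y) l"
      proof (cases "y \<in> C")
        case True
        then show ?thesis by (auto simp: lit_true_set_lit)
      next
        case False
        then have "C - {comp y} \<in> assign F y" using C by (auto simp: assign_def)
        then obtain l where l: "l \<in> C" "l \<noteq> comp y" "lit_true \<phi> l"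
          using \<phi> unfolding satisfies_def by blast
        then have "var_lit l \<noteq> var_lit y" using False l(1,2) var_lit_eq_iff[of l y] by auto
        then show ?thesis using l by (auto simp: lit_true_set_lit)
      qed
    qed
    then show False using MU_not_satisfies[OF mu] by blast
  qed
  have minimal: "satisfiable (assign F y - {E})" if E: "E \<in> assign F y" for E
  proof -
    obtain C where C: "C \<in> F" "y \<notin> C" "E = C - {comp y}" using E by (auto simp: assign_def)
    obtain \<phi> where \<phi>: "satisfies \<phi> (F - {C})" "lit_true \<phi> y" "\<forall>l\<in>C. \<not> lit_true \<phi> l"
      using saturated_falsifying_assignment[OF sat y C(1,2)] by blast
    have "satisfies \<phi> (assign F y - {E})"
      unfolding satisfies_def
    proof
      fix E' assume "E' \<in> assign F y - {E}"
      then obtain D where D: "D \<in> F" "D \<noteq> C" "E' = D - {comp y}"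
        using C by (auto simp: assign_def)
      then obtain l where l: "l \<in> D" "lit_true \<phi> l" using \<phi>(1) by (auto simp: satisfies_def)
      then have "l \<noteq> comp y" using \<phi>(2) by auto
      then show "\<exists>l\<in>E'. lit_true \<phi> l" using l D(3) by blast
    qed
    then show ?thesis by (auto simp: satisfiable_iff_satisfies)
  qed
  show ?thesis using clauses unsat minimal by (auto simp: MU_def satisfiable_iff_satisfies)
qed

lemma card_assign:
  assumes sat: "saturated F" and y: "var_lit y \<in> var F"
  shows "card (assign F y) = card F - ld F y"
proof -
  have "card (assign F y) = card {C\<in>F. y \<notin> C}"
    unfolding assign_def using inj_on_assign[OF sat y] by (rule card_image)
  also have "{C\<in>F. y \<notin> C} = F - {C\<in>F. y \<in> C}" by blast
  also have "card \<dots> = card F - ld F y"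
    using MU_finite[OF saturated_MU[OF sat]] by (simp add: ld_def card_Diff_subset)
  finally show ?thesis .
qed

lemma vdeg_assign:
  assumes sat: "saturated F" and y: "var_lit y \<in> var F" and w: "w \<noteq> var_lit y"
  shows "vdeg (assign F y) w = card {C\<in>F. y \<notin> C \<and> w \<in> var_lit ` C}"
proof -
  have "vdeg (assign F y) w = card {D\<in>assign F y. w \<in> var_lit ` D}"
    using vdeg_eq_card MU_is_clause_set[OF MU_assign[OF sat y]] by blast
  also have "{D\<in>assign F y. w \<in> var_lit ` D}
      = (\<lambda>C. C - {comp y}) ` {C\<in>F. y \<notin> C \<and> w \<in> var_lit ` C}"
  proof -
    have "w \<in> var_lit ` (C - {comp y}) \<longleftrightarrow> w \<in> var_lit ` C" for C
    proof
      assume "w \<in> var_lit ` C"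
      then obtain l where "l \<in> C" "w = var_lit l" by blast
      moreover have "l \<noteq> comp y" using w \<open>w = var_lit l\<close> by auto
      ultimately show "w \<in> var_lit ` (C - {comp y})" by blast
    qed blast
    then show ?thesis by (auto simp: assign_def)
  qed
  also have "card \<dots> = card {C\<in>F. y \<notin> C \<and> w \<in> var_lit ` C}"
    by (rule card_image, rule inj_on_subset[OF inj_on_assign[OF sat y]]) blast
  finally show ?thesis .
qed

lemma vdeg_le_ld_plus_vdeg_assign:
  assumes sat: "saturated F" and y: "var_lit y \<in> var F" and w: "w \<noteq> var_lit y"
  shows "vdeg F w \<le> ld F y + vdeg (assign F y) w"
proof -
  have fin: "finite F" using MU_finite[OF saturated_MU[OF sat]] .
  have "vdeg F w = card {C\<in>F. w \<in> var_lit ` C}"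
    using vdeg_eq_card MU_is_clause_set[OF saturated_MU[OF sat]] by blast
  also have "\<dots> \<le> card ({C\<in>F. y \<in> C} \<union> {C\<in>F. y \<notin> C \<and> w \<in> var_lit ` C})"
    using fin by (intro card_mono) auto
  also have "\<dots> \<le> ld F y + card {C\<in>F. y \<notin> C \<and> w \<in> var_lit ` C}"
    unfolding ld_def by (rule card_Un_le)
  finally show ?thesis using vdeg_assign[OF assms] by simp
qed

text \<open>If \<open>var_lit y\<close> has minimum degree, every other variable occurs in more than \<open>ld F y\<close>
  clauses (there are no pure literals), hence survives the assignment.\<close>

lemma var_assign_of_min_degree:
  assumes sat: "saturated F" and y: "var_lit y \<in> var F"
    and min: "\<forall>w\<in>var F. vdeg F (var_lit y) \<le> vdeg F w"
  shows "var (assign F y) = var F - {var_lit y}"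
proof
  show "var (assign F y) \<subseteq> var F - {var_lit y}" by (rule var_assign_subset)
  show "var F - {var_lit y} \<subseteq> var (assign F y)"
  proof
    fix w assume "w \<in> var F - {var_lit y}"
    then have w: "w \<in> var F" "w \<noteq> var_lit y" by simp_all
    have "0 < ld F (comp y)" using MU_ld_pos[OF saturated_MU[OF sat]] y by simp
    then have "ld F y < vdeg F (var_lit y)" by (simp add: vdeg_var_lit)
    also have "\<dots> \<le> vdeg F w" using min w(1) by blast
    finally have "0 < vdeg (assign F y) w"
      using vdeg_le_ld_plus_vdeg_assign[OF sat y w(2)] by simp
    then have "0 < card {D\<in>assign F y. w \<in> var_lit ` D}"
      using vdeg_eq_card[OF MU_is_clause_set[OF MU_assign[OF sat y]]] by simp
    then have "{D\<in>assign F y. w \<in> var_lit ` D} \<noteq> {}" using card_gt_0_iff by blast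
    then show "w \<in> var (assign F y)" by (auto simp: var_def)
  qed
qed

lemma deficiency_assign:
  assumes sat: "saturated F" and y: "var_lit y \<in> var F"
    and min: "\<forall>w\<in>var F. vdeg F (var_lit y) \<le> vdeg F w"
  shows "deficiency (assign F y) = deficiency F - int (ld F y) + 1"
proof -
  have mu: "MU F" using sat by (rule saturated_MU)
  have "ld F y \<le> card F" unfolding ld_def using MU_finite[OF mu] by (intro card_mono) auto
  moreover have "card (var (assign F y)) = card (var F) - 1"
    using var_assign_of_min_degree[OF assms] y by simp
  moreover have "0 < card (var F)" using y finite_var[OF MU_is_clause_set[OF mu]] card_gt_0_iff by blast
  ultimately show ?thesis using card_assign[OF sat y] by (simp add: deficiency_def of_nat_diff)
qed

text \<open>If some \<open>z \<in> C - {y}\<close> were missing from \<open>D\<close>, saturation would give an assignment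
  falsifying only \<open>D\<close> and making \<open>z\<close> true; setting \<open>comp y\<close> then satisfies every clause.\<close>

lemma saturated_singular_clause_subset:
  assumes sat: "saturated F" and C: "{D\<in>F. y \<in> D} = {C}" and D: "D \<in> F" "comp y \<in> D"
  shows "C - {y} \<subseteq> D"
proof
  fix z assume z: "z \<in> C - {y}"
  have mu: "MU F" using sat by (rule saturated_MU)
  have "C \<in> F" "y \<in> C" using C by auto
  then have "z \<noteq> comp y" using z is_clause_comp_notin[OF MU_is_clause[OF mu]] by blast
  then have z_y: "var_lit z \<noteq> var_lit y" using z var_lit_eq_iff[of z y] by auto
  show "z \<in> D"
  proof (rule ccontr)
    assume "z \<notin> D"
    have "var_lit z \<in> var F" using \<open>C \<in> F\<close> z by (auto simp: var_def)
    then obtain \<phi> where \<phi>: "satisfies \<phi> (F - {D})" "lit_true \<phi> z"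
      using saturated_falsifying_assignment[OF sat _ D(1) \<open>z \<notin> D\<close>] by blast
    have "satisfies (set_lit \<phi> (comp y)) F"
      unfolding satisfies_def
    proof
      fix E assume E: "E \<in> F"
      consider "comp y \<in> E" | "y \<in> E" | "comp y \<notin> E" "y \<notin> E" by blast
      then show "\<exists>l\<in>E. lit_true (set_lit \<phi> (comp y)) l"
      proof cases
        case 1
        moreover have "lit_true (set_lit \<phi> (comp y)) (comp y)" by (simp add: lit_true_set_lit)
        ultimately show ?thesis by blast
      next
        case 2
        then have "E = C" using C E by blast
        moreover have "lit_true (set_lit \<phi> (comp y)) z" using \<phi>(2) z_y by (simp add: lit_true_set_lit)
        ultimately show ?thesis using z by blast
      next
        case 3
        then have "E \<noteq> D" using D(2) by blast
        then obtain l where l: "l \<in> E" "lit_true \<phi> l" using \<phi>(1) E unfolding satisfies_def by blast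
        then have "var_lit l \<noteq> var_lit y" using 3 var_lit_eq_iff[of l y] by auto
        then have "lit_true (set_lit \<phi> (comp y)) l" using l(2) by (simp add: lit_true_set_lit)
        then show ?thesis using l(1) by blast
      qed
    qed
    then show False using MU_not_satisfies[OF mu] by blast
  qed
qed

lemma vdeg_assign_singular:
  assumes sat: "saturated F" and ld: "ld F y = 1" and w: "w \<in> var F" "w \<noteq> var_lit y"
  shows "min (vdeg F (var_lit y)) (vdeg F w) \<le> vdeg (assign F y) w"
proof -
  have mu: "MU F" using sat by (rule saturated_MU)
  have fin: "finite F" using MU_finite[OF mu] .
  obtain C where C: "{D\<in>F. y \<in> D} = {C}" using ld unfolding ld_def by (rule card_1_singletonE)
  then have "C \<in> F" "y \<in> C" by auto
  then have y: "var_lit y \<in> var F" by (auto simp: var_def)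
  note vdeg_R = vdeg_assign[OF sat y w(2)]
  show ?thesis
  proof (cases "w \<in> var_lit ` C")
    case False
    then have "{D\<in>F. y \<notin> D \<and> w \<in> var_lit ` D} = {D\<in>F. w \<in> var_lit ` D}" using C by blast
    then have "vdeg (assign F y) w = vdeg F w"
      using vdeg_R vdeg_eq_card[OF MU_is_clause_set[OF mu]] by simp
    then show ?thesis by simp
  next
    case True
    then obtain z where z: "z \<in> C" "var_lit z = w" by blast
    have "z \<noteq> y" using z w(2) by blast
    have "0 < ld F (comp z)" using MU_ld_pos[OF mu] z w(1) by simp
    then have "{D\<in>F. comp z \<in> D} \<noteq> {}" unfolding ld_def using card_gt_0_iff by blast
    then obtain E where E: "E \<in> F" "comp z \<in> E" by blast
    have z_in: "z \<in> D" if "D \<in> F" "comp y \<in> D" for D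
      using saturated_singular_clause_subset[OF sat C that] z \<open>z \<noteq> y\<close> by blast
    have E_notin: "E \<notin> {D\<in>F. comp y \<in> D}"
      using z_in E is_clause_comp_notin[OF MU_is_clause[OF mu E(1)]] by fastforce
    have "E \<noteq> C" using E z is_clause_comp_notin[OF MU_is_clause[OF mu \<open>C \<in> F\<close>]] by blast
    have sub: "insert E {D\<in>F. comp y \<in> D} \<subseteq> {D\<in>F. y \<notin> D \<and> w \<in> var_lit ` D}"
    proof
      fix D assume "D \<in> insert E {D\<in>F. comp y \<in> D}"
      then consider "D = E" | "D \<in> F" "comp y \<in> D" by blast
      then show "D \<in> {D\<in>F. y \<notin> D \<and> w \<in> var_lit ` D}"
      proof cases
        case 1
        have "var_lit (comp z) = w" using z(2) by simp
        then show ?thesis using 1 E C \<open>E \<noteq> C\<close> by blast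
      next
        case 2
        then have "y \<notin> D" using is_clause_comp_notin[OF MU_is_clause[OF mu]] comp_comp by metis
        then show ?thesis using 2 z_in z(2) by blast
      qed
    qed
    have "vdeg F (var_lit y) = card (insert E {D\<in>F. comp y \<in> D})"
      using E_notin fin ld by (simp add: vdeg_var_lit ld_def)
    also have "\<dots> \<le> vdeg (assign F y) w" using vdeg_R card_mono[OF _ sub] fin by simp
    finally show ?thesis by simp
  qed
qed

lemma minvdeg_le: "finite (var F) \<Longrightarrow> v \<in> var F \<Longrightarrow> minvdeg F \<le> vdeg F v"
  by (simp add: minvdeg_def)

lemma minvdeg_attained:
  assumes "finite (var F)" "var F \<noteq> {}"
  obtains v where "v \<in> var F" "vdeg F v = minvdeg F"
proof -
  have "Min (vdeg F ` var F) \<in> vdeg F ` var F" using assms by (intro Min_in) auto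
  then obtain v where "v \<in> var F" "vdeg F v = Min (vdeg F ` var F)" by (metis imageE)
  then show thesis using that unfolding minvdeg_def by blast
qed

lemma minvdeg_le_mu:
  assumes "MU F" "deficiency F = int k" "var F \<noteq> {}"
  shows "enat (minvdeg F) \<le> mu k"
  unfolding mu_def minvdeg_class_def using assms by (intro Sup_upper) (auto simp: MU_delta_def)

lemma ex_saturated_min_degree_var:
  assumes mu: "MU F" and "var F \<noteq> {}"
  obtains G v where "saturated G" "deficiency G = deficiency F" "var G = var F" "v \<in> var G"
    "\<forall>w\<in>var G. vdeg G v \<le> vdeg G w" "minvdeg F \<le> vdeg G v"
proof -
  obtain G where G: "saturated G" "extends_clausewise F G" "var G = var F"
    using ex_saturated_extension[OF mu] by blast
  have muG: "MU G" using G(1) by (rule saturated_MU)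
  have finG: "finite (var G)" using finite_var[OF MU_is_clause_set[OF muG]] .
  obtain v where v: "v \<in> var G" "vdeg G v = minvdeg G"
    using minvdeg_attained[OF finG] assms(2) G(3) by metis
  have "minvdeg F \<le> vdeg F v" using minvdeg_le v(1) G(3) finG by simp
  also have "\<dots> \<le> vdeg G v"
    using extends_clausewise_vdeg_le[OF G(2) MU_is_clause_set[OF mu] MU_is_clause_set[OF muG]] .
  finally show thesis
    using that G(1,3) v minvdeg_le[OF finG] extends_clausewise_card[OF G(2)]
    by (simp add: deficiency_def)
qed

lemma singular_reduct:
  assumes sat: "saturated F" and y: "var_lit y \<in> var F"
    and min: "\<forall>w\<in>var F. vdeg F (var_lit y) \<le> vdeg F w"
    and ld: "ld F y = 1" and def: "deficiency F = int k" and k: "2 \<le> k"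
  shows "MU (assign F y)" "deficiency (assign F y) = int k"
    "var (assign F y) = var F - {var_lit y}" "var (assign F y) \<noteq> {}"
    "vdeg F (var_lit y) \<le> minvdeg (assign F y)"
proof -
  show muR: "MU (assign F y)" using MU_assign[OF sat y] .
  show varR: "var (assign F y) = var F - {var_lit y}" using var_assign_of_min_degree[OF sat y min] .
  show defR: "deficiency (assign F y) = int k" using deficiency_assign[OF sat y min] def ld by simp
  show nonempty: "var (assign F y) \<noteq> {}"
  proof
    assume "var (assign F y) = {}"
    then have "card (assign F y) \<le> 1" by (rule card_le_one_if_var_empty)
    then show False using defR k \<open>var (assign F y) = {}\<close> by (simp add: deficiency_def)
  qed
  have "finite (var (assign F y))" using finite_var[OF MU_is_clause_set[OF muR]] .
  then obtain w where w: "w \<in> var (assign F y)" "vdeg (assign F y) w = minvdeg (assign F y)"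
    using minvdeg_attained nonempty by blast
  have "w \<in> var F" "w \<noteq> var_lit y" using w(1) varR by auto
  then have "min (vdeg F (var_lit y)) (vdeg F w) \<le> minvdeg (assign F y)"
    using vdeg_assign_singular[OF sat ld] w(2) by metis
  then show "vdeg F (var_lit y) \<le> minvdeg (assign F y)" using min \<open>w \<in> var F\<close> by auto
qed

definition degree_admissible :: "(nat \<Rightarrow> enat) \<Rightarrow> nat \<Rightarrow> nat \<Rightarrow> nat \<Rightarrow> bool" where
  "degree_admissible f k M e \<longleftrightarrow> 2 \<le> e \<and> e \<le> k \<and> enat M \<le> f (k - e + 1) + enat e"

lemma pdp_altdef:
  "pdp f k m = {(e0, e1). e0 \<le> e1 \<and> e0 + e1 = m
      \<and> degree_admissible f k m e0 \<and> degree_admissible f k m e1}"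
  by (auto simp: pdp_def degree_admissible_def)

text \<open>The reduct by \<open>y\<close> has deficiency \<open>k - e + 1\<close>, with \<open>e = ld F y\<close>, and every variable loses
  at most \<open>e\<close> occurrences in it.\<close>

lemma degree_admissible_nonsingular:
  assumes sat: "saturated F" and y: "var_lit y \<in> var F"
    and min: "\<forall>w\<in>var F. vdeg F (var_lit y) \<le> vdeg F w"
    and ld: "2 \<le> ld F y" and def: "deficiency F = int k"
  shows "degree_admissible mu k (vdeg F (var_lit y)) (ld F y)"
proof -
  define R where "R = assign F y"
  have mu: "MU F" using sat by (rule saturated_MU)
  have muR: "MU R" using MU_assign[OF sat y] by (simp add: R_def)
  have varR: "var R = var F - {var_lit y}"
    using var_assign_of_min_degree[OF sat y min] by (simp add: R_def)
  have "deficiency R = int k - int (ld F y) + 1"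
    using deficiency_assign[OF sat y min] def by (simp add: R_def)
  moreover have "0 < deficiency R" using MU_deficiency_pos[OF muR] .
  ultimately have e_k: "ld F y \<le> k" and defR: "deficiency R = int (k - ld F y + 1)" by simp_all
  have "var R \<noteq> {}"
  proof
    assume "var R = {}"
    then have "var F = {var_lit y}" using varR y by blast
    then show False using ld_le_one_if_var_eq[OF MU_is_clause_set[OF mu]] ld by fastforce
  qed
  moreover have finR: "finite (var R)" using finite_var[OF MU_is_clause_set[OF muR]] .
  ultimately obtain w where w: "w \<in> var R" "vdeg R w = minvdeg R" using minvdeg_attained by blast
  have "vdeg F (var_lit y) \<le> vdeg F w" using min w(1) varR by blast
  also have "\<dots> \<le> ld F y + minvdeg R"
  proof -
    have "w \<noteq> var_lit y" using w(1) varR by blast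
    then have "vdeg F w \<le> ld F y + vdeg R w"
      using vdeg_le_ld_plus_vdeg_assign[OF sat y] by (simp add: R_def)
    then show ?thesis using w(2) by simp
  qed
  finally have "enat (vdeg F (var_lit y)) \<le> enat (minvdeg R) + enat (ld F y)" by simp
  also have "\<dots> \<le> mu (k - ld F y + 1) + enat (ld F y)"
    using minvdeg_le_mu[OF muR defR \<open>var R \<noteq> {}\<close>] by (rule add_right_mono)
  finally show ?thesis using ld e_k by (simp add: degree_admissible_def)
qed

text \<open>Induction on the number of variables: setting a singular literal of a minimum-degree
  variable keeps the deficiency and does not lower the minimum degree.\<close>

lemma MU_degree_pair:
  assumes "MU F" "deficiency F = int k" "2 \<le> k" "var F \<noteq> {}"
  shows "\<exists>e0 e1. minvdeg F \<le> e0 + e1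
    \<and> degree_admissible mu k (e0 + e1) e0 \<and> degree_admissible mu k (e0 + e1) e1"
  using assms
proof (induction "card (var F)" arbitrary: F rule: less_induct)
  case less
  obtain G v where G: "saturated G" "deficiency G = int k" "var G = var F" "v \<in> var G"
    and min: "\<forall>w\<in>var G. vdeg G v \<le> vdeg G w" and FM: "minvdeg F \<le> vdeg G v"
    using ex_saturated_min_degree_var[OF less.prems(1,4)] less.prems(2) by metis
  have muG: "MU G" using G(1) by (rule saturated_MU)
  have finG: "finite (var G)" using finite_var[OF MU_is_clause_set[OF muG]] .
  have "0 < ld G (Pos v)" "0 < ld G (Neg v)" using MU_ld_pos[OF muG] G(4) by simp_all
  then consider (singular) y where "var_lit y = v" "ld G y = 1"
    | (nonsingular) "2 \<le> ld G (Pos v)" "2 \<le> ld G (Neg v)"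
    by (metis One_nat_def Suc_1 Suc_leI le_neq_implies_less var_lit.simps)
  then show ?case
  proof cases
    case singular
    have y: "var_lit y \<in> var G" and minG: "\<forall>w\<in>var G. vdeg G (var_lit y) \<le> vdeg G w"
      using singular(1) G(4) min by simp_all
    note R = singular_reduct[OF G(1) y minG singular(2) G(2) less.prems(3)]
    have "card (var (assign G y)) < card (var F)"
      using card_Diff1_less[OF finG G(4)] R(3) G(3) singular(1) by simp
    then obtain e0 e1 where e: "minvdeg (assign G y) \<le> e0 + e1"
      "degree_admissible mu k (e0 + e1) e0" "degree_admissible mu k (e0 + e1) e1"
      using less.hyps R(1,2,4) less.prems(3) by blast
    have "vdeg G v \<le> minvdeg (assign G y)" using R(5) singular(1) by simp
    then show ?thesis using FM e by (meson le_trans)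
  next
    case nonsingular
    have "vdeg G v = ld G (Pos v) + ld G (Neg v)" by (simp add: vdeg_def)
    moreover have "degree_admissible mu k (vdeg G v) (ld G (Pos v))"
      using degree_admissible_nonsingular[OF G(1), of "Pos v"] G(2,4) min nonsingular(1) by simp
    moreover have "degree_admissible mu k (vdeg G v) (ld G (Neg v))"
      using degree_admissible_nonsingular[OF G(1), of "Neg v"] G(2,4) min nonsingular(2) by simp
    ultimately show ?thesis using FM by metis
  qed
qed

lemma degree_admissible_bound_mono:
  assumes "\<forall>j\<ge>1. g j \<le> f j" "degree_admissible g k M e"
  shows "degree_admissible f k M e"
proof -
  have "enat M \<le> g (k - e + 1) + enat e" using assms(2) by (simp add: degree_admissible_def)
  also have "\<dots> \<le> f (k - e + 1) + enat e" using assms(1) by (intro add_right_mono) simp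
  finally show ?thesis using assms(2) by (simp add: degree_admissible_def)
qed

lemma degree_admissible_lower:
  assumes mono: "mono_on {1..} f" and adm: "degree_admissible f k M e"
    and a: "2 \<le> a" "a \<le> e" "e - a \<le> M - m" "m \<le> M"
  shows "degree_admissible f k m a"
proof -
  have le: "f (k - e + 1) \<le> f (k - a + 1)" using mono a(2) by (intro mono_onD[OF mono]) auto
  have M: "enat M \<le> f (k - e + 1) + enat e" "e \<le> k" using adm by (simp_all add: degree_admissible_def)
  have "enat m \<le> f (k - a + 1) + enat a"
  proof (cases "f (k - e + 1)")
    case infinity
    then show ?thesis using le by simp
  next
    case (enat t)
    then have "M \<le> t + e" using M(1) by simp
    then have "enat m \<le> enat t + enat a" using a by simp
    also have "\<dots> \<le> f (k - a + 1) + enat a" using le enat by (intro add_right_mono) simp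
    finally show ?thesis .
  qed
  then show ?thesis using a M(2) by (simp add: degree_admissible_def)
qed

lemma pdp_nonempty:
  assumes mono: "mono_on {1..} f"
    and adm: "degree_admissible f k (e0 + e1) e0" "degree_admissible f k (e0 + e1) e1"
    and m: "4 \<le> m" "m \<le> e0 + e1"
  shows "pdp f k m \<noteq> {}"
proof -
  have e: "2 \<le> e0" "2 \<le> e1" using adm by (simp_all add: degree_admissible_def)
  define a0 where "a0 = max 2 (m - e1)"
  define a1 where "a1 = m - a0"
  have a0: "2 \<le> a0" "a0 \<le> e0" "e0 - a0 \<le> e0 + e1 - m" using e m by (auto simp: a0_def)
  have a1: "2 \<le> a1" "a1 \<le> e1" "e1 - a1 \<le> e0 + e1 - m" using e m by (auto simp: a0_def a1_def)
  have "degree_admissible f k m a0" using degree_admissible_lower[OF mono adm(1) a0 m(2)] .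
  moreover have "degree_admissible f k m a1" using degree_admissible_lower[OF mono adm(2) a1 m(2)] .
  moreover have "a0 + a1 = m" using e m by (simp add: a0_def a1_def)
  ultimately have "(min a0 a1, max a0 a1) \<in> pdp f k m"
    unfolding pdp_altdef by (auto simp: min_def max_def)
  then show ?thesis by blast
qed

theorem theorem13p10:
  fixes k m :: nat and f :: "nat \<Rightarrow> enat"
  assumes "k \<ge> 2" and "m \<ge> 4"
    and "valid_bounds_function f"
    and "pdp f k m = {}"
  shows "minvdeg_class (MU_delta k) < enat m"
proof -
  have mono: "mono_on {1..} f" and bound: "\<forall>j\<ge>1. mu j \<le> f j"
    using assms(3) by (simp_all add: valid_bounds_function_def)
  have "minvdeg F < m" if F: "F \<in> MU_delta k" "var F \<noteq> {}" for F
  proof (rule ccontr)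
    assume "\<not> minvdeg F < m"
    have "MU F" "deficiency F = int k" using F(1) by (simp_all add: MU_delta_def)
    then obtain e0 e1 where e: "minvdeg F \<le> e0 + e1"
      "degree_admissible mu k (e0 + e1) e0" "degree_admissible mu k (e0 + e1) e1"
      using MU_degree_pair assms(1) F(2) by blast
    have "pdp f k m \<noteq> {}"
      using pdp_nonempty[OF mono degree_admissible_bound_mono[OF bound e(2)]
          degree_admissible_bound_mono[OF bound e(3)] assms(2)] \<open>\<not> minvdeg F < m\<close> e(1)
      by simp
    then show False using assms(4) by blast
  qed
  then have "minvdeg_class (MU_delta k) \<le> enat (m - 1)"
    unfolding minvdeg_class_def by (intro Sup_least) fastforce
  also have "\<dots> < enat m" using assms(2) by simp
  finally show ?thesis .
qed

end
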